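(* Let $t \ge 3$ be an integer and let $G$ be a block graph. Then $\mathrm{CF}_t(G)$ is $(t-2)$-decomposable and hence shellable.
   Context: All graphs are finite and simple. A block of a graph is a maximal connected subgraph that remains connected after removal of any single vertex; $G$ is a block graph if every block is a complete graph. $\mathrm{CF}_t(G)$ is the simplicial complex on $V(G)$ whose faces are the subsets $A\subseteq V(G)$ such that $G[A]$ contains no clique on $t$ vertices. For a simplicial complex $\Delta$ on $V$ and a face $F$: $\operatorname{link}_\Delta(F) = \{F' : F'\cap F=\emptyset, F'\cup F\in\Delta\}$, $\Delta\setminus F = \{H\in\Delta : H\cap F=\emptyset\}$, $\dim F=|F|-1$. A face $\sigma$ is a shedding face if for every $\tau\in\Delta$ with $\sigma\subseteq\tau$ and every $v\in\sigma$ there is $w\in V\setminus\tau$ with $(\tau\cup\{w\})\setminus\{v\}\in\Delta$. $\Delta$ is $k$-decomposable if it is a simplex (including $\emptyset$, $\{\emptyset\}$) or has a shedding face $\sigma$ with $\dim\sigma\le k$ such that $\Delta\setminus\sigma$ and $\operatorname{link}_\Delta(\sigma)$ are $k$-decomposable. $\Delta$ is shellable if its facets admit an order $F_1,\dots,F_s$ such that for all $i<j$ there exist $v\in F_j\setminus F_i$ and $\ell<j$ with $F_j\setminus F_\ell=\{v\}$. *)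

theory Defs
  imports Main
begin

definition simple_graph :: "'a set \<Rightarrow> 'a set set \<Rightarrow> bool" where
  "simple_graph V E \<longleftrightarrow> finite V \<and> (\<forall>e\<in>E. e \<subseteq> V \<and> card e = 2)"

definition is_subgraph :: "'a set \<Rightarrow> 'a set set \<Rightarrow> 'a set \<Rightarrow> 'a set set \<Rightarrow> bool" where
  "is_subgraph W F V E \<longleftrightarrow> W \<subseteq> V \<and> F \<subseteq> E \<and> (\<forall>e\<in>F. e \<subseteq> W)"

definition adj_rel :: "'a set set \<Rightarrow> ('a \<times> 'a) set" where
  "adj_rel F = {(x, y). {x, y} \<in> F}"

definition connected_graph :: "'a set \<Rightarrow> 'a set set \<Rightarrow> bool" where
  "connected_graph W F \<longleftrightarrow> W \<noteq> {} \<and> (\<forall>x\<in>W. \<forall>y\<in>W. (x, y) \<in> (adj_rel F)\<^sup>*)"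

text \<open>Connected, and remains connected after deleting any single vertex
  (deleting the only vertex of a one-vertex graph is not counted as disconnecting).\<close>
definition biconn :: "'a set \<Rightarrow> 'a set set \<Rightarrow> bool" where
  "biconn W F \<longleftrightarrow> connected_graph W F \<and>
     (\<forall>v\<in>W. W - {v} \<noteq> {} \<longrightarrow> connected_graph (W - {v}) {e\<in>F. v \<notin> e})"

definition is_block :: "'a set \<Rightarrow> 'a set set \<Rightarrow> 'a set \<Rightarrow> 'a set set \<Rightarrow> bool" where
  "is_block V E W F \<longleftrightarrow> is_subgraph W F V E \<and> biconn W F \<and>
     (\<forall>W' F'. is_subgraph W' F' V E \<and> biconn W' F' \<and> W \<subseteq> W' \<and> F \<subseteq> F'
        \<longrightarrow> W' = W \<and> F' = F)"

definition complete_graph :: "'a set \<Rightarrow> 'a set set \<Rightarrow> bool" where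
  "complete_graph W F \<longleftrightarrow> (\<forall>x\<in>W. \<forall>y\<in>W. x \<noteq> y \<longrightarrow> {x, y} \<in> F)"

definition block_graph :: "'a set \<Rightarrow> 'a set set \<Rightarrow> bool" where
  "block_graph V E \<longleftrightarrow> simple_graph V E \<and>
     (\<forall>W F. is_block V E W F \<longrightarrow> complete_graph W F)"

definition is_clique :: "'a set set \<Rightarrow> 'a set \<Rightarrow> bool" where
  "is_clique E K \<longleftrightarrow> (\<forall>x\<in>K. \<forall>y\<in>K. x \<noteq> y \<longrightarrow> {x, y} \<in> E)"

definition CF :: "nat \<Rightarrow> 'a set \<Rightarrow> 'a set set \<Rightarrow> 'a set set" where
  "CF t V E = {A. A \<subseteq> V \<and> \<not> (\<exists>K\<subseteq>A. card K = t \<and> is_clique E K)}"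

definition link :: "'a set set \<Rightarrow> 'a set \<Rightarrow> 'a set set" where
  "link \<Delta> F = {F'. F' \<inter> F = {} \<and> F' \<union> F \<in> \<Delta>}"

definition del :: "'a set set \<Rightarrow> 'a set \<Rightarrow> 'a set set" where
  "del \<Delta> F = {H\<in>\<Delta>. H \<inter> F = {}}"

text \<open>Shedding face. The requirement w \<in> V is automatic since
  (\<tau> \<union> {w}) - {v} is then a face containing w (as w \<notin> \<tau>, v \<in> \<tau>).\<close>
definition shedding_face :: "'a set set \<Rightarrow> 'a set \<Rightarrow> bool" where
  "shedding_face \<Delta> \<sigma> \<longleftrightarrow> \<sigma> \<in> \<Delta> \<and>
     (\<forall>\<tau>\<in>\<Delta>. \<sigma> \<subseteq> \<tau> \<longrightarrow> (\<forall>v\<in>\<sigma>. \<exists>w. w \<notin> \<tau> \<and> (insert w \<tau>) - {v} \<in> \<Delta>))"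

text \<open>A simplex: the void complex or the power set of a finite set (Pow {} = {{}}).\<close>
definition is_simplex :: "'a set set \<Rightarrow> bool" where
  "is_simplex \<Delta> \<longleftrightarrow> \<Delta> = {} \<or> (\<exists>F. finite F \<and> \<Delta> = Pow F)"

text \<open>k-decomposability; dim \<sigma> = card \<sigma> - 1 \<le> k is written card \<sigma> \<le> k + 1.\<close>
inductive k_decomposable :: "nat \<Rightarrow> 'a set set \<Rightarrow> bool" for k :: nat where
  simplex: "is_simplex \<Delta> \<Longrightarrow> k_decomposable k \<Delta>"
| shed: "\<lbrakk> shedding_face \<Delta> \<sigma>; card \<sigma> \<le> k + 1;
          k_decomposable k (del \<Delta> \<sigma>); k_decomposable k (link \<Delta> \<sigma>) \<rbrakk>
         \<Longrightarrow> k_decomposable k \<Delta>"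

definition facets :: "'a set set \<Rightarrow> 'a set set" where
  "facets \<Delta> = {F\<in>\<Delta>. \<forall>G\<in>\<Delta>. F \<subseteq> G \<longrightarrow> G = F}"

definition shellable :: "'a set set \<Rightarrow> bool" where
  "shellable \<Delta> \<longleftrightarrow> (\<exists>Fs. distinct Fs \<and> set Fs = facets \<Delta> \<and>
     (\<forall>i j. i < j \<and> j < length Fs \<longrightarrow>
        (\<exists>v \<in> Fs ! j - Fs ! i. \<exists>l < j. Fs ! j - Fs ! l = {v})))"

end

theory Submission
  imports Defs "HOL-Library.Product_Order"
begin

text \<open>In a block graph every clique lies in a block and every block is a clique, so a vertex set
  spans no clique on t vertices iff it meets every block in at most t - 1 vertices. Such
  ``capped'' complexes are vertex decomposable whenever the family of capped sets is treelike,
  as the blocks of a graph are. Indeed, if some block B has more than t - 1 vertices, choose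
  such a B that meets the other over-full blocks only in one vertex y. Then y is a shedding
  vertex: a face containing y can trade y for a vertex of B it misses without exceeding any
  cap. Deletion and link of y are again capped complexes on fewer vertices. Vertex
  decomposability implies k-decomposability for every k, and it implies shellability:
  a shelling of the deletion followed by the cone over a shelling of the link is a shelling.\<close>

section \<open>Vertex decomposable complexes are shellable\<close>

lemma shedding_vertexE:
  assumes "shedding_face \<Delta> {y}" "\<tau> \<in> \<Delta>" "y \<in> \<tau>"
  obtains w where "w \<notin> \<tau>" "insert w \<tau> - {y} \<in> \<Delta>"
proof -
  have "\<forall>\<tau>\<in>\<Delta>. {y} \<subseteq> \<tau> \<longrightarrow> (\<forall>v\<in>{y}. \<exists>w. w \<notin> \<tau> \<and> insert w \<tau> - {v} \<in> \<Delta>)"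
    using assms(1) unfolding shedding_face_def by (rule conjunct2)
  then have "\<exists>w. w \<notin> \<tau> \<and> insert w \<tau> - {y} \<in> \<Delta>" using assms(2,3) by simp
  then show thesis using that by blast
qed

lemma facetsI: "F \<in> \<Delta> \<Longrightarrow> (\<And>G. G \<in> \<Delta> \<Longrightarrow> F \<subseteq> G \<Longrightarrow> G = F) \<Longrightarrow> F \<in> facets \<Delta>"
  unfolding facets_def by blast

lemma facetsD:
  assumes "F \<in> facets \<Delta>"
  shows "F \<in> \<Delta>" "G \<in> \<Delta> \<Longrightarrow> F \<subseteq> G \<Longrightarrow> G = F"
  using assms unfolding facets_def by blast+

lemma ex_facet_superset:
  assumes "finite \<Delta>" "F \<in> \<Delta>"
  obtains H where "H \<in> facets \<Delta>" "F \<subseteq> H"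
proof -
  obtain H where H: "H \<in> \<Delta>" "F \<subseteq> H" "\<forall>G\<in>\<Delta>. H \<subseteq> G \<longrightarrow> H = G"
    using finite_has_maximal2[OF assms] by blast
  then have "H \<in> facets \<Delta>" by (intro facetsI) auto
  then show thesis using H(2) by (rule that)
qed

lemma facets_del_shedding_vertex:
  assumes shed: "shedding_face \<Delta> {y}"
  shows "facets (del \<Delta> {y}) = {F \<in> facets \<Delta>. y \<notin> F}"
proof (intro set_eqI iffI)
  fix F assume F: "F \<in> facets (del \<Delta> {y})"
  then have yF: "y \<notin> F" and "F \<in> \<Delta>" using facetsD(1) by (fastforce simp: del_def)+
  moreover have "G = F" if G: "G \<in> \<Delta>" "F \<subseteq> G" for G
  proof (cases "y \<in> G")
    case True
    \<comment> \<open>Swapping y for a new vertex w gives a face avoiding y that strictly contains F.\<close>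
    obtain w where w: "w \<notin> G" "insert w G - {y} \<in> \<Delta>"
      using shed G(1) True by (rule shedding_vertexE)
    have "insert w G - {y} \<in> del \<Delta> {y}" using w(2) by (simp add: del_def)
    moreover have "F \<subseteq> insert w G - {y}" using G(2) yF by blast
    ultimately have "insert w G - {y} = F" by (rule facetsD(2)[OF F])
    then show ?thesis using w(1) G(2) by blast
  next
    case False
    then have "G \<in> del \<Delta> {y}" using G(1) by (simp add: del_def)
    then show ?thesis using G(2) by (rule facetsD(2)[OF F])
  qed
  ultimately show "F \<in> {F \<in> facets \<Delta>. y \<notin> F}" using facetsI by blast
next
  fix F assume "F \<in> {F \<in> facets \<Delta>. y \<notin> F}"
  then have F: "F \<in> facets \<Delta>" "y \<notin> F" by auto
  show "F \<in> facets (del \<Delta> {y})"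
  proof (rule facetsI)
    show "F \<in> del \<Delta> {y}" using F facetsD(1) by (auto simp: del_def)
    show "G = F" if "G \<in> del \<Delta> {y}" "F \<subseteq> G" for G
      using that facetsD(2)[OF F(1)] by (simp add: del_def)
  qed
qed

lemma image_insert_facets_link:
  "insert y ` facets (link \<Delta> {y}) = {F \<in> facets \<Delta>. y \<in> F}"
proof (intro set_eqI iffI)
  fix F assume "F \<in> insert y ` facets (link \<Delta> {y})"
  then obtain G where G: "G \<in> facets (link \<Delta> {y})" and FG: "F = insert y G" by blast
  have GL: "insert y G \<in> \<Delta>" "y \<notin> G" using facetsD(1)[OF G] by (auto simp: link_def)
  have "F \<in> facets \<Delta>"
  proof (rule facetsI)
    show "F \<in> \<Delta>" using GL FG by simp
    show "H = F" if H: "H \<in> \<Delta>" "F \<subseteq> H" for H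
    proof -
      have "H - {y} \<in> link \<Delta> {y}" using H FG by (auto simp: link_def insert_absorb)
      moreover have "G \<subseteq> H - {y}" using H(2) FG GL(2) by blast
      ultimately have "H - {y} = G" by (rule facetsD(2)[OF G])
      then show ?thesis using H(2) FG by blast
    qed
  qed
  then show "F \<in> {F \<in> facets \<Delta>. y \<in> F}" using FG by simp
next
  fix F assume "F \<in> {F \<in> facets \<Delta>. y \<in> F}"
  then have F: "F \<in> facets \<Delta>" "y \<in> F" by auto
  have "F - {y} \<in> facets (link \<Delta> {y})"
  proof (rule facetsI)
    show "F - {y} \<in> link \<Delta> {y}" using F facetsD(1) by (auto simp: link_def insert_absorb)
    show "G = F - {y}" if G: "G \<in> link \<Delta> {y}" "F - {y} \<subseteq> G" for G
    proof -
      have "insert y G \<in> \<Delta>" "y \<notin> G" using G(1) by (auto simp: link_def)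
      moreover have "F \<subseteq> insert y G" using G(2) by blast
      ultimately show ?thesis using facetsD(2)[OF F(1)] by blast
    qed
  qed
  then show "F \<in> insert y ` facets (link \<Delta> {y})" using F(2) by (metis insert_Diff image_eqI)
qed

definition shelling :: "'a set list \<Rightarrow> bool" where
  "shelling Fs \<longleftrightarrow> (\<forall>i j. i < j \<and> j < length Fs \<longrightarrow>
     (\<exists>v \<in> Fs ! j - Fs ! i. \<exists>l < j. Fs ! j - Fs ! l = {v}))"

lemma shellable_iff_shelling:
  "shellable \<Delta> \<longleftrightarrow> (\<exists>Fs. distinct Fs \<and> set Fs = facets \<Delta> \<and> shelling Fs)"
  unfolding shellable_def shelling_def ..

lemma shellingD:
  "shelling Fs \<Longrightarrow> i < j \<Longrightarrow> j < length Fs \<Longrightarrow> \<exists>v \<in> Fs ! j - Fs ! i. \<exists>l < j. Fs ! j - Fs ! l = {v}"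
  unfolding shelling_def by blast

lemma shelling_append_cone:
  assumes Ds: "shelling Ds" and Ls: "shelling Ls"
    and yDs: "\<forall>D \<in> set Ds. y \<notin> D" and yLs: "\<forall>L \<in> set Ls. y \<notin> L"
    and cross: "\<forall>L \<in> set Ls. \<exists>D \<in> set Ds. insert y L - D = {y}"
  shows "shelling (Ds @ map (insert y) Ls)"
  unfolding shelling_def
proof (intro allI impI)
  fix i j
  let ?Fs = "Ds @ map (insert y) Ls" and ?m = "length Ds"
  assume ij: "i < j \<and> j < length ?Fs"
  have lo: "?Fs ! k = Ds ! k" if "k < ?m" for k
    using that by (simp add: nth_append)
  have hi: "?Fs ! (?m + k) = insert y (Ls ! k)" if "k < length Ls" for k
    using that by (simp add: nth_append)
  consider "j < ?m" | "?m \<le> i" | "i < ?m" "?m \<le> j" by linarith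
  then show "\<exists>v \<in> ?Fs ! j - ?Fs ! i. \<exists>l < j. ?Fs ! j - ?Fs ! l = {v}"
  proof cases
    case 1
    then obtain v l where v: "v \<in> Ds ! j - Ds ! i" "l < j" "Ds ! j - Ds ! l = {v}"
      using shellingD[OF Ds] ij by blast
    moreover have "?Fs ! j = Ds ! j" "?Fs ! i = Ds ! i" "?Fs ! l = Ds ! l"
      using lo 1 ij v(2) by simp_all
    ultimately show ?thesis by metis
  next
    case 2
    define i' j' where "i' = i - ?m" and "j' = j - ?m"
    have ij': "i' < j'" "j' < length Ls" "i = ?m + i'" "j = ?m + j'"
      using 2 ij unfolding i'_def j'_def by auto
    then obtain v l where v: "v \<in> Ls ! j' - Ls ! i'" "l < j'" "Ls ! j' - Ls ! l = {v}"
      using shellingD[OF Ls] by blast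
    have "y \<notin> Ls ! j'" "y \<notin> Ls ! l" using yLs ij' v(2) by auto
    then have "v \<in> ?Fs ! j - ?Fs ! i" "?Fs ! j - ?Fs ! (?m + l) = {v}"
      using v ij' hi by auto
    moreover have "?m + l < j" using v(2) ij' by simp
    ultimately show ?thesis by blast
  next
    case 3
    define j' where "j' = j - ?m"
    have j': "j' < length Ls" "j = ?m + j'" using 3 ij unfolding j'_def by auto
    obtain l where l: "l < ?m" "insert y (Ls ! j') - Ds ! l = {y}"
      using cross j'(1) by (metis in_set_conv_nth nth_mem)
    have "y \<in> ?Fs ! j - ?Fs ! i" using yDs 3 j' lo hi by auto
    moreover have "?Fs ! j - ?Fs ! l = {y}" "l < j" using l j' lo hi by auto
    ultimately show ?thesis by blast
  qed
qed

lemma shellable_shedding_vertex: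
  assumes fin: "finite \<Delta>" and shed: "shedding_face \<Delta> {y}"
    and "shellable (del \<Delta> {y})" and "shellable (link \<Delta> {y})"
  shows "shellable \<Delta>"
proof -
  obtain Ds Ls where Ds: "distinct Ds" "set Ds = facets (del \<Delta> {y})" "shelling Ds"
    and Ls: "distinct Ls" "set Ls = facets (link \<Delta> {y})" "shelling Ls"
    using assms(3,4) unfolding shellable_iff_shelling by blast
  have facets_Ds: "set Ds = {F \<in> facets \<Delta>. y \<notin> F}"
    using Ds(2) facets_del_shedding_vertex[OF shed] by simp
  have facets_Ls: "insert y ` set Ls = {F \<in> facets \<Delta>. y \<in> F}"
    using Ls(2) image_insert_facets_link by simp
  have yDs: "\<forall>D \<in> set Ds. y \<notin> D" using facets_Ds by simp
  have yLs: "\<forall>L \<in> set Ls. y \<notin> L" using Ls(2) facetsD(1) by (fastforce simp: link_def)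
  have cross: "\<exists>D \<in> set Ds. insert y L - D = {y}" if L: "L \<in> set Ls" for L
  proof -
    have F: "insert y L \<in> facets \<Delta>" using L facets_Ls by blast
    obtain w where w: "w \<notin> insert y L" "insert w (insert y L) - {y} \<in> \<Delta>"
      using shed facetsD(1)[OF F] by (rule shedding_vertexE) simp
    then obtain H where H: "H \<in> facets \<Delta>" "insert w (insert y L) - {y} \<subseteq> H"
      using ex_facet_superset[OF fin] by blast
    have "y \<notin> H"
    proof
      assume "y \<in> H"
      then have "H = insert y L" using facetsD(2)[OF F facetsD(1)[OF H(1)]] H(2) by blast
      then show False using H(2) w(1) by blast
    qed
    then have "H \<in> set Ds" using H(1) facets_Ds by simp
    moreover have "insert y L - H = {y}" using H(2) \<open>y \<notin> H\<close> yLs L by auto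
    ultimately show ?thesis by blast
  qed
  have "inj_on (insert y) (set Ls)"
    using yLs by (intro inj_onI) (metis Diff_insert_absorb)
  then have "distinct (Ds @ map (insert y) Ls)"
    using Ds(1) Ls(1) yDs by (auto simp: distinct_map)
  moreover have "set (Ds @ map (insert y) Ls) = facets \<Delta>"
    using facets_Ds facets_Ls by auto
  ultimately show ?thesis unfolding shellable_iff_shelling
    using shelling_append_cone[OF Ds(3) Ls(3) yDs yLs] cross by blast
qed

lemma shellable_simplex:
  assumes "is_simplex \<Delta>"
  shows "shellable \<Delta>"
proof -
  have "shellable {}" unfolding shellable_iff_shelling
    by (rule exI[of _ "[]"]) (simp add: facets_def shelling_def)
  moreover have "shellable (Pow F)" for F :: "'a set"
  proof -
    have "facets (Pow F) = {F}" by (auto simp: facets_def)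
    then show ?thesis unfolding shellable_iff_shelling
      by (intro exI[of _ "[F]"]) (simp add: shelling_def)
  qed
  ultimately show ?thesis using assms unfolding is_simplex_def by blast
qed

theorem vertex_decomposable_shellable:
  assumes "k_decomposable 0 \<Delta>" "finite V" "\<Delta> \<subseteq> Pow V"
  shows "shellable \<Delta>"
  using assms
proof (induction rule: k_decomposable.induct)
  case (simplex \<Delta>)
  from simplex.hyps show ?case by (rule shellable_simplex)
next
  case (shed \<Delta> \<sigma>)
  \<comment> \<open>Finiteness of V rules out infinite shedding faces, whose card is 0.\<close>
  have "\<sigma> \<in> \<Delta>" using shed.hyps(1) unfolding shedding_face_def by (rule conjunct1)
  then have "finite \<sigma>" using shed.prems finite_subset by blast
  moreover have "card \<sigma> = 0 \<or> card \<sigma> = 1" using shed.hyps(2) by linarith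
  ultimately consider "\<sigma> = {}" | y where "\<sigma> = {y}" by (auto simp: card_1_singleton_iff)
  then show ?case
  proof cases
    case 1
    then show ?thesis using shed by (simp add: del_def)
  next
    case 2
    have "del \<Delta> {y} \<subseteq> Pow V" "link \<Delta> {y} \<subseteq> Pow V"
      using shed.prems(2) by (auto simp: del_def link_def)
    then show ?thesis
      using shed 2 finite_subset[OF shed.prems(2)] by (auto intro!: shellable_shedding_vertex[of \<Delta> y])
  qed
qed

lemma k_decomposable_mono:
  assumes "k_decomposable k \<Delta>" "k \<le> k'"
  shows "k_decomposable k' \<Delta>"
  using assms(1)
proof (induction rule: k_decomposable.induct)
  case (simplex \<Delta>)
  then show ?case by (rule k_decomposable.simplex)
next
  case (shed \<Delta> \<sigma>)
  then show ?case using assms(2) by (intro k_decomposable.shed[of \<Delta> \<sigma>]) auto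
qed


section \<open>Complexes with capacities on a treelike family of sets\<close>

definition capped_complex :: "'a set \<Rightarrow> 'a set set \<Rightarrow> ('a set \<Rightarrow> nat) \<Rightarrow> 'a set set" where
  "capped_complex V Bs c = {A. A \<subseteq> V \<and> (\<forall>B\<in>Bs. card (A \<inter> B) \<le> c B)}"

text \<open>Every nonempty subfamily has a leaf: a member attached to the others through a single
  point, as a leaf block of a graph is attached through its cut vertex.\<close>
definition treelike :: "'a set set \<Rightarrow> bool" where
  "treelike Bs \<longleftrightarrow> (\<forall>C \<subseteq> Bs. C \<noteq> {} \<longrightarrow> (\<exists>B\<in>C. \<exists>y. \<forall>B'\<in>C - {B}. B \<inter> B' \<subseteq> {y}))"

lemma capped_complex_subset_Pow: "capped_complex V Bs c \<subseteq> Pow V"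
  unfolding capped_complex_def by blast

lemma capped_complex_eq_Pow:
  assumes "finite V" "\<forall>B\<in>Bs. card (B \<inter> V) \<le> c B"
  shows "capped_complex V Bs c = Pow V"
proof -
  have "card (A \<inter> B) \<le> c B" if "A \<subseteq> V" "B \<in> Bs" for A B
  proof -
    have "card (A \<inter> B) \<le> card (B \<inter> V)" using that(1) assms(1) by (intro card_mono) auto
    also have "\<dots> \<le> c B" using assms(2) that(2) by blast
    finally show ?thesis .
  qed
  then show ?thesis unfolding capped_complex_def by blast
qed

lemma capped_complex_downward_closed:
  assumes "finite V" "A \<in> capped_complex V Bs c" "A' \<subseteq> A"
  shows "A' \<in> capped_complex V Bs c"
proof -
  have "card (A' \<inter> B) \<le> c B" if "B \<in> Bs" for B
  proof -
    have "finite A" using assms(1,2) finite_subset unfolding capped_complex_def by blast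
    then have "card (A' \<inter> B) \<le> card (A \<inter> B)" using assms(3) by (intro card_mono) auto
    also have "\<dots> \<le> c B" using assms(2) that unfolding capped_complex_def by blast
    finally show ?thesis .
  qed
  then show ?thesis using assms(2,3) unfolding capped_complex_def by blast
qed

lemma capped_complex_avoid_vertex:
  assumes "finite V" "{y} \<notin> capped_complex V Bs c"
  shows "capped_complex V Bs c = capped_complex (V - {y}) Bs c"
proof -
  have "y \<notin> A" if "A \<in> capped_complex V Bs c" for A
    using capped_complex_downward_closed[OF assms(1) that, of "{y}"] assms(2) by blast
  then show ?thesis unfolding capped_complex_def by blast
qed

lemma del_capped_complex: "del (capped_complex V Bs c) {y} = capped_complex (V - {y}) Bs c"
  unfolding del_def capped_complex_def by auto

lemma link_capped_complex:
  assumes fin: "finite V" and y: "{y} \<in> capped_complex V Bs c"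
  shows "link (capped_complex V Bs c) {y} =
    capped_complex (V - {y}) Bs (\<lambda>B. c B - card (B \<inter> {y}))"
proof (intro set_eqI)
  fix A
  have yV: "y \<in> V" using y unfolding capped_complex_def by blast
  have cap_iff: "card ((A \<union> {y}) \<inter> B) \<le> c B \<longleftrightarrow> card (A \<inter> B) \<le> c B - card (B \<inter> {y})"
    if A: "A \<subseteq> V - {y}" and B: "B \<in> Bs" for B
  proof -
    have "finite A" using A fin finite_subset by blast
    moreover have "(A \<union> {y}) \<inter> B = (A \<inter> B) \<union> (B \<inter> {y})" "(A \<inter> B) \<inter> (B \<inter> {y}) = {}"
      using A by auto
    ultimately have "card ((A \<union> {y}) \<inter> B) = card (A \<inter> B) + card (B \<inter> {y})"
      by (simp add: card_Un_disjoint)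
    moreover have "card (B \<inter> {y}) \<le> c B"
      using y B unfolding capped_complex_def by (simp add: Int_commute)
    ultimately show ?thesis by linarith
  qed
  have "A \<in> link (capped_complex V Bs c) {y} \<longleftrightarrow>
      A \<subseteq> V - {y} \<and> (\<forall>B\<in>Bs. card ((A \<union> {y}) \<inter> B) \<le> c B)"
    using yV unfolding link_def capped_complex_def by blast
  also have "\<dots> \<longleftrightarrow> A \<subseteq> V - {y} \<and> (\<forall>B\<in>Bs. card (A \<inter> B) \<le> c B - card (B \<inter> {y}))"
    using cap_iff by blast
  finally show "A \<in> link (capped_complex V Bs c) {y} \<longleftrightarrow>
      A \<in> capped_complex (V - {y}) Bs (\<lambda>B. c B - card (B \<inter> {y}))"
    unfolding capped_complex_def by simp
qed

lemma card_insert_Diff_le: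
  assumes "finite A" "y \<in> A"
  shows "card (insert w A - {y}) \<le> card A"
proof -
  have "card (insert w A - {y}) \<le> card (insert w (A - {y}))"
    using assms(1) by (intro card_mono) auto
  also have "\<dots> \<le> Suc (card (A - {y}))" using assms(1) by (simp add: card_insert_if)
  also have "\<dots> = card A" using assms by (rule card_Suc_Diff1)
  finally show ?thesis .
qed

lemma capped_complex_exchange:
  assumes fin: "finite V" and \<tau>: "\<tau> \<in> capped_complex V Bs c" "y \<in> \<tau>"
    and w: "w \<in> B" "w \<in> V" "w \<noteq> y" and "y \<in> B"
    and leaf: "\<forall>B'\<in>Bs - {B}. c B' < card (B' \<inter> V) \<longrightarrow> B \<inter> B' \<inter> V \<subseteq> {y}"
  shows "insert w \<tau> - {y} \<in> capped_complex V Bs c"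
proof -
  have \<tau>V: "\<tau> \<subseteq> V" and cap: "\<And>B'. B' \<in> Bs \<Longrightarrow> card (\<tau> \<inter> B') \<le> c B'"
    using \<tau>(1) unfolding capped_complex_def by blast+
  have fin\<tau>: "finite \<tau>" using \<tau>V fin finite_subset by blast
  have "card ((insert w \<tau> - {y}) \<inter> B') \<le> c B'" if B': "B' \<in> Bs" for B'
  proof -
    consider "w \<notin> B'" | "w \<in> B'" "y \<in> B'" | "w \<in> B'" "y \<notin> B'" by blast
    then show ?thesis
    proof cases
      case 1
      then have "card ((insert w \<tau> - {y}) \<inter> B') \<le> card (\<tau> \<inter> B')"
        using fin\<tau> by (intro card_mono) auto
      then show ?thesis using cap[OF B'] by linarith
    next
      case 2
      have "(insert w \<tau> - {y}) \<inter> B' = insert w (\<tau> \<inter> B') - {y}" using 2 by blast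
      also have "card \<dots> \<le> card (\<tau> \<inter> B')"
        using fin\<tau> 2 \<tau>(2) by (intro card_insert_Diff_le) auto
      finally show ?thesis using cap[OF B'] by linarith
    next
      case 3
      \<comment> \<open>B' meets B in w \<noteq> y, so by the leaf property B' is not over its cap.\<close>
      then have "B' \<noteq> B" using \<open>y \<in> B\<close> by blast
      moreover have "\<not> B \<inter> B' \<inter> V \<subseteq> {y}" using w 3(1) by blast
      ultimately have "card (B' \<inter> V) \<le> c B'" using leaf B' by (meson DiffI not_less singletonD)
      moreover have "card ((insert w \<tau> - {y}) \<inter> B') \<le> card (B' \<inter> V)"
        using fin \<tau>V w(2) by (intro card_mono) auto
      ultimately show ?thesis by linarith
    qed
  qed
  moreover have "insert w \<tau> - {y} \<subseteq> V" using \<tau>V w(2) by blast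
  ultimately show ?thesis unfolding capped_complex_def by blast
qed

lemma capped_complex_shedding_vertex:
  assumes fin: "finite V" and B: "B \<in> Bs" "c B < card (B \<inter> V)" and "y \<in> B"
    and leaf: "\<forall>B'\<in>Bs - {B}. c B' < card (B' \<inter> V) \<longrightarrow> B \<inter> B' \<inter> V \<subseteq> {y}"
    and face: "{y} \<in> capped_complex V Bs c"
  shows "shedding_face (capped_complex V Bs c) {y}"
proof -
  have "\<exists>w. w \<notin> \<tau> \<and> insert w \<tau> - {y} \<in> capped_complex V Bs c"
    if \<tau>: "\<tau> \<in> capped_complex V Bs c" "y \<in> \<tau>" for \<tau>
  proof -
    have "finite \<tau>" using \<tau>(1) fin finite_subset unfolding capped_complex_def by blast
    have "\<not> B \<inter> V \<subseteq> \<tau>"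
    proof
      assume "B \<inter> V \<subseteq> \<tau>"
      then have "card (B \<inter> V) \<le> card (\<tau> \<inter> B)" using \<open>finite \<tau>\<close> by (intro card_mono) auto
      moreover have "card (\<tau> \<inter> B) \<le> c B" using \<tau>(1) B(1) unfolding capped_complex_def by blast
      ultimately show False using B(2) by linarith
    qed
    then obtain w where w: "w \<in> B" "w \<in> V" "w \<notin> \<tau>" by blast
    then have "insert w \<tau> - {y} \<in> capped_complex V Bs c"
      using \<tau> \<open>y \<in> B\<close> leaf by (intro capped_complex_exchange[OF fin]) auto
    then show ?thesis using w(3) by blast
  qed
  then show ?thesis using face by (simp add: shedding_face_def)
qed

lemma treelike_leafE:
  assumes "treelike Bs" "C \<subseteq> Bs" "C \<noteq> {}" "\<forall>B\<in>C. B \<inter> V \<noteq> {}"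
  obtains B y where "B \<in> C" "y \<in> B \<inter> V" "\<forall>B'\<in>C - {B}. B \<inter> B' \<inter> V \<subseteq> {y}"
proof -
  obtain B y0 where B: "B \<in> C" "\<forall>B'\<in>C - {B}. B \<inter> B' \<subseteq> {y0}"
    using assms(1-3) unfolding treelike_def by meson
  obtain y where "y \<in> B \<inter> V" "y0 \<in> B \<inter> V \<Longrightarrow> y = y0"
    using assms(4) B(1) by blast
  then show thesis using B by (intro that[of B y]) auto
qed

theorem capped_complex_vertex_decomposable:
  assumes "finite V" "treelike Bs"
  shows "k_decomposable 0 (capped_complex V Bs c)"
  using assms(1)
proof (induction "card V" arbitrary: V c rule: less_induct)
  case less
  let ?\<Delta> = "capped_complex V Bs c"
  define C where "C = {B \<in> Bs. c B < card (B \<inter> V)}"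
  show ?case
  proof (cases "C = {}")
    case True
    then have "?\<Delta> = Pow V"
      using less.prems unfolding C_def by (intro capped_complex_eq_Pow) (auto simp: not_less)
    moreover have "is_simplex (Pow V)" using less.prems unfolding is_simplex_def by blast
    ultimately show ?thesis by (simp add: k_decomposable.simplex)
  next
    case False
    have "\<forall>B\<in>C. B \<inter> V \<noteq> {}" unfolding C_def by fastforce
    then obtain B y where B: "B \<in> C" and y: "y \<in> B \<inter> V"
      and leaf: "\<forall>B'\<in>C - {B}. B \<inter> B' \<inter> V \<subseteq> {y}"
      using treelike_leafE[OF assms(2) _ False] unfolding C_def by blast
    have IH: "k_decomposable 0 (capped_complex (V - {y}) Bs c')" for c'
    proof -
      have "card (V - {y}) < card V" using less.prems y by (intro card_Diff1_less) auto
      then show ?thesis using less.hyps less.prems by simp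
    qed
    show ?thesis
    proof (cases "{y} \<in> ?\<Delta>")
      case False
      then show ?thesis using IH capped_complex_avoid_vertex[OF less.prems False] by simp
    next
      case True
      have "shedding_face ?\<Delta> {y}"
        using B y leaf True unfolding C_def by (intro capped_complex_shedding_vertex less.prems) auto
      then show ?thesis
      proof (rule k_decomposable.shed)
        show "k_decomposable 0 (del ?\<Delta> {y})" using IH by (simp add: del_capped_complex)
        show "k_decomposable 0 (link ?\<Delta> {y})"
          using IH by (simp add: link_capped_complex[OF less.prems True])
      qed simp
    qed
  qed
qed

section \<open>The blocks of a block graph\<close>

definition blocks :: "'a set \<Rightarrow> 'a set set \<Rightarrow> 'a set set" where
  "blocks V E = {W. \<exists>F. is_block V E W F}"

definition path_edges :: "(nat \<Rightarrow> 'a) \<Rightarrow> nat \<Rightarrow> 'a set set" where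
  "path_edges f n = (\<lambda>k. {f k, f (Suc k)}) ` {..<n}"

lemma rtrancl_adj_rel_sym: "(x, y) \<in> (adj_rel F)\<^sup>* \<Longrightarrow> (y, x) \<in> (adj_rel F)\<^sup>*"
proof -
  have "sym (adj_rel F)" unfolding adj_rel_def sym_def by (auto simp: insert_commute)
  then have "sym ((adj_rel F)\<^sup>*)" by (rule sym_rtrancl)
  then show "(x, y) \<in> (adj_rel F)\<^sup>* \<Longrightarrow> (y, x) \<in> (adj_rel F)\<^sup>*" by (rule symD)
qed

lemma rtrancl_adj_rel_mono:
  assumes "F \<subseteq> F'" "(x, y) \<in> (adj_rel F)\<^sup>*"
  shows "(x, y) \<in> (adj_rel F')\<^sup>*"
proof -
  have "adj_rel F \<subseteq> adj_rel F'" using assms(1) unfolding adj_rel_def by auto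
  then show ?thesis using assms(2) rtrancl_mono by blast
qed

lemma rtrancl_adj_rel_path:
  assumes "a \<le> b" "\<And>k. a \<le> k \<Longrightarrow> k < b \<Longrightarrow> {f k, f (Suc k)} \<in> F"
  shows "(f a, f b) \<in> (adj_rel F)\<^sup>*"
  using assms(1)
proof (induction b rule: dec_induct)
  case (step k)
  then have "(f k, f (Suc k)) \<in> adj_rel F" using assms(2) unfolding adj_rel_def by simp
  with step.IH show ?case by (rule rtrancl_into_rtrancl)
qed simp

lemma connected_graphI:
  assumes "h \<in> W" "\<And>x. x \<in> W \<Longrightarrow> (x, h) \<in> (adj_rel F)\<^sup>*"
  shows "connected_graph W F"
  unfolding connected_graph_def
proof (intro conjI ballI)
  show "W \<noteq> {}" using assms(1) by blast
  fix x y assume "x \<in> W" "y \<in> W"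
  then show "(x, y) \<in> (adj_rel F)\<^sup>*"
    using assms(2) rtrancl_adj_rel_sym rtrancl_trans by metis
qed

lemma connected_graph_complete:
  assumes "W \<noteq> {}" "\<And>x y. x \<in> W \<Longrightarrow> y \<in> W \<Longrightarrow> x \<noteq> y \<Longrightarrow> {x, y} \<in> F"
  shows "connected_graph W F"
  unfolding connected_graph_def
proof (intro conjI ballI)
  fix x y assume "x \<in> W" "y \<in> W"
  then show "(x, y) \<in> (adj_rel F)\<^sup>*"
    using assms(2) by (cases "x = y") (auto simp: adj_rel_def)
qed (rule assms(1))

lemma connected_graph_mono:
  assumes "connected_graph W F" "F \<subseteq> F'"
  shows "connected_graph W F'"
proof -
  have "(x, y) \<in> (adj_rel F')\<^sup>*" if "x \<in> W" "y \<in> W" for x y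
  proof -
    have "(x, y) \<in> (adj_rel F)\<^sup>*" using assms(1) that unfolding connected_graph_def by blast
    with assms(2) show ?thesis by (rule rtrancl_adj_rel_mono)
  qed
  then show ?thesis using assms(1) unfolding connected_graph_def by blast
qed

lemma connected_graph_Un_reach:
  assumes "connected_graph W G" "\<And>x. x \<in> W' \<Longrightarrow> \<exists>h\<in>W. (x, h) \<in> (adj_rel G)\<^sup>*"
  shows "connected_graph (W \<union> W') G"
proof -
  obtain h where h: "h \<in> W" using assms(1) unfolding connected_graph_def by blast
  have W_reach: "(x, h) \<in> (adj_rel G)\<^sup>*" if "x \<in> W" for x
    using assms(1) that h unfolding connected_graph_def by blast
  show ?thesis
  proof (rule connected_graphI)
    show "h \<in> W \<union> W'" using h by blast
    fix x assume "x \<in> W \<union> W'"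
    then show "(x, h) \<in> (adj_rel G)\<^sup>*"
    proof
      assume "x \<in> W'"
      then obtain h' where "h' \<in> W" "(x, h') \<in> (adj_rel G)\<^sup>*" using assms(2) by blast
      then show ?thesis using W_reach by (blast intro: rtrancl_trans)
    qed (rule W_reach)
  qed
qed

lemma biconn_connected_avoiding:
  assumes bi: "biconn W F" and FW: "\<forall>e\<in>F. e \<subseteq> W" and "W - {v} \<noteq> {}"
  shows "connected_graph (W - {v}) {e\<in>F. v \<notin> e}"
proof (cases "v \<in> W")
  case True
  then show ?thesis using bi assms(3) unfolding biconn_def by blast
next
  case False
  then have "W - {v} = W" "{e\<in>F. v \<notin> e} = F" using FW by blast+
  then show ?thesis using bi unfolding biconn_def by simp
qed

lemma biconn_extend:
  assumes bi: "biconn W F" and FW: "\<forall>e\<in>F. e \<subseteq> W" and ab: "a \<in> W" "b \<in> W" "a \<noteq> b"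
    and reach: "\<And>v x. x \<in> W' - {v} \<Longrightarrow> \<exists>h\<in>W - {v}. (x, h) \<in> (adj_rel {e\<in>F'. v \<notin> e})\<^sup>*"
  shows "biconn (W \<union> W') (F \<union> F')"
proof -
  have reach': "\<exists>h\<in>W - {v}. (x, h) \<in> (adj_rel {e\<in>F \<union> F'. v \<notin> e})\<^sup>*" if x: "x \<in> W' - {v}" for v x
  proof -
    obtain h where h: "h \<in> W - {v}" "(x, h) \<in> (adj_rel {e\<in>F'. v \<notin> e})\<^sup>*"
      using reach[OF x] by blast
    have "{e\<in>F'. v \<notin> e} \<subseteq> {e\<in>F \<union> F'. v \<notin> e}" by blast
    then have "(x, h) \<in> (adj_rel {e\<in>F \<union> F'. v \<notin> e})\<^sup>*" using h(2) by (rule rtrancl_adj_rel_mono)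
    then show ?thesis using h(1) by blast
  qed
  have avoid: "connected_graph (W \<union> W' - {v}) {e\<in>F \<union> F'. v \<notin> e}" for v
  proof -
    have "connected_graph (W - {v}) {e\<in>F. v \<notin> e}"
      using ab by (intro biconn_connected_avoiding[OF bi FW]) blast
    then have "connected_graph (W - {v}) {e\<in>F \<union> F'. v \<notin> e}" by (rule connected_graph_mono) blast
    then have "connected_graph ((W - {v}) \<union> (W' - {v})) {e\<in>F \<union> F'. v \<notin> e}"
      using reach' by (rule connected_graph_Un_reach)
    then show ?thesis by (simp add: Un_Diff)
  qed
  have "connected_graph W F" using bi unfolding biconn_def by blast
  then have "connected_graph W (F \<union> F')" by (rule connected_graph_mono) blast
  moreover have "\<exists>h\<in>W. (x, h) \<in> (adj_rel (F \<union> F'))\<^sup>*" if x: "x \<in> W'" for x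
  proof (cases "x = a")
    case False
    \<comment> \<open>The hypothesis only provides paths avoiding some vertex; take a.\<close>
    then obtain h where h: "h \<in> W - {a}" "(x, h) \<in> (adj_rel {e\<in>F \<union> F'. a \<notin> e})\<^sup>*"
      using reach'[of x a] x by blast
    have "{e\<in>F \<union> F'. a \<notin> e} \<subseteq> F \<union> F'" by blast
    then have "(x, h) \<in> (adj_rel (F \<union> F'))\<^sup>*" using h(2) by (rule rtrancl_adj_rel_mono)
    then show ?thesis using h(1) by blast
  qed (use ab in blast)
  ultimately have "connected_graph (W \<union> W') (F \<union> F')" by (rule connected_graph_Un_reach)
  then show ?thesis unfolding biconn_def using avoid by blast
qed

lemma biconn_Un:
  assumes bi1: "biconn W1 F1" "\<forall>e\<in>F1. e \<subseteq> W1" and bi2: "biconn W2 F2" "\<forall>e\<in>F2. e \<subseteq> W2"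
    and ab: "a \<in> W1 \<inter> W2" "b \<in> W1 \<inter> W2" "a \<noteq> b"
  shows "biconn (W1 \<union> W2) (F1 \<union> F2)"
proof (rule biconn_extend[OF bi1])
  show "a \<in> W1" "b \<in> W1" "a \<noteq> b" using ab by auto
  fix v x assume x: "x \<in> W2 - {v}"
  obtain h where h: "h \<in> {a, b} - {v}" using ab(3) by blast
  have "connected_graph (W2 - {v}) {e\<in>F2. v \<notin> e}"
    using x by (intro biconn_connected_avoiding[OF bi2]) blast
  then have "(x, h) \<in> (adj_rel {e\<in>F2. v \<notin> e})\<^sup>*"
    using x h ab unfolding connected_graph_def by blast
  then show "\<exists>h\<in>W1 - {v}. (x, h) \<in> (adj_rel {e\<in>F2. v \<notin> e})\<^sup>*" using h ab by blast
qed

lemma path_reach_end_avoiding: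
  assumes inj: "inj_on f {0..n}" and k: "k \<le> n" "f k \<noteq> v"
  shows "\<exists>e\<in>{0, n}. f e \<noteq> v \<and> (f k, f e) \<in> (adj_rel {e\<in>path_edges f n. v \<notin> e})\<^sup>*"
proof -
  let ?P = "{e\<in>path_edges f n. v \<notin> e}"
  have edge: "{f i, f (Suc i)} \<in> ?P" if "i < n" "f i \<noteq> v" "f (Suc i) \<noteq> v" for i
    using that unfolding path_edges_def by auto
  show ?thesis
  proof (cases "v \<in> f ` {0..k}")
    case False
    then have avoid: "f i \<noteq> v" if "i \<le> k" for i using that by auto
    then have "(f 0, f k) \<in> (adj_rel ?P)\<^sup>*"
      using k(1) by (intro rtrancl_adj_rel_path edge) auto
    then have "(f k, f 0) \<in> (adj_rel ?P)\<^sup>*" by (rule rtrancl_adj_rel_sym)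
    then show ?thesis using avoid by blast
  next
    case True
    \<comment> \<open>v lies before f k on the path, so the rest of the path avoids it.\<close>
    then obtain m where m: "m \<le> k" "f m = v" by auto
    have "v \<notin> f ` {k..n}"
    proof
      assume "v \<in> f ` {k..n}"
      then obtain m' where "m' \<in> {k..n}" "f m' = f m" using m(2) by auto
      then have "m' = m" using inj m(1) k(1) unfolding inj_on_def by (meson atLeastAtMost_iff le_trans zero_le)
      then show False using \<open>m' \<in> {k..n}\<close> m k(2) by auto
    qed
    then have avoid: "f i \<noteq> v" if "k \<le> i" "i \<le> n" for i using that by auto
    then have "(f k, f n) \<in> (adj_rel ?P)\<^sup>*"
      using k(1) by (intro rtrancl_adj_rel_path edge) auto
    then show ?thesis using avoid k(1) by blast
  qed
qed

lemma biconn_add_path: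
  assumes bi: "biconn W F" "\<forall>e\<in>F. e \<subseteq> W"
    and f: "0 < n" "inj_on f {0..n}" "f 0 \<in> W" "f n \<in> W"
  shows "biconn (W \<union> f ` {0..n}) (F \<union> path_edges f n)"
proof (rule biconn_extend[OF bi])
  show "f 0 \<in> W" "f n \<in> W" using f by auto
  show "f 0 \<noteq> f n" using f(1,2) unfolding inj_on_def by fastforce
  fix v x assume "x \<in> f ` {0..n} - {v}"
  then obtain k where "k \<le> n" "x = f k" "f k \<noteq> v" by auto
  then show "\<exists>h\<in>W - {v}. (x, h) \<in> (adj_rel {e\<in>path_edges f n. v \<notin> e})\<^sup>*"
    using path_reach_end_avoiding[OF f(2)] f(3,4) by blast
qed

lemma blocks_subset: "W \<in> blocks V E \<Longrightarrow> W \<subseteq> V"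
  unfolding blocks_def is_block_def is_subgraph_def by (elim CollectE exE conjE)

lemma block_edge:
  assumes "block_graph V E" "W \<in> blocks V E" "x \<in> W" "y \<in> W" "x \<noteq> y"
  shows "{x, y} \<in> E"
proof -
  obtain F where F: "is_block V E W F" using assms(2) unfolding blocks_def by blast
  then have "complete_graph W F" using assms(1) unfolding block_graph_def by simp
  then have "{x, y} \<in> F" using assms(3-5) unfolding complete_graph_def by simp
  moreover have "F \<subseteq> E" using F unfolding is_block_def is_subgraph_def by simp
  ultimately show ?thesis by (rule subsetD[rotated])
qed

lemma block_maximal:
  assumes "is_block V E W F" "is_subgraph W' F' V E" "biconn W' F'" "W \<subseteq> W'" "F \<subseteq> F'"
  shows "W' = W"
  using assms unfolding is_block_def by (elim conjE allE impE) auto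

lemma blocks_eq_if_two_common_vertices:
  assumes "W1 \<in> blocks V E" "W2 \<in> blocks V E" "a \<in> W1 \<inter> W2" "b \<in> W1 \<inter> W2" "a \<noteq> b"
  shows "W1 = W2"
proof -
  obtain F1 F2 where b1: "is_block V E W1 F1" and b2: "is_block V E W2 F2"
    using assms(1,2) unfolding blocks_def by blast
  have s1: "is_subgraph W1 F1 V E" "biconn W1 F1" and s2: "is_subgraph W2 F2 V E" "biconn W2 F2"
    using b1 b2 unfolding is_block_def by blast+
  have e1: "\<forall>e\<in>F1. e \<subseteq> W1" and e2: "\<forall>e\<in>F2. e \<subseteq> W2"
    using s1(1) s2(1) unfolding is_subgraph_def by blast+
  have sub: "is_subgraph (W1 \<union> W2) (F1 \<union> F2) V E"
    using s1(1) s2(1) unfolding is_subgraph_def by blast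
  have bi: "biconn (W1 \<union> W2) (F1 \<union> F2)" by (rule biconn_Un[OF s1(2) e1 s2(2) e2 assms(3-5)])
  have "W1 \<union> W2 = W1" by (rule block_maximal[OF b1 sub bi]) auto
  moreover have "W1 \<union> W2 = W2" by (rule block_maximal[OF b2 sub bi]) auto
  ultimately show ?thesis by simp
qed

lemma block_contains_path:
  assumes W: "W \<in> blocks V E" and f: "inj_on f {0..n}" "f 0 \<in> W" "f n \<in> W"
    and fV: "\<And>k. k \<le> n \<Longrightarrow> f k \<in> V" and fE: "\<And>k. k < n \<Longrightarrow> {f k, f (Suc k)} \<in> E"
  shows "f ` {0..n} \<subseteq> W"
proof (cases "n = 0")
  case True
  then show ?thesis using f(2) by simp
next
  case False
  obtain F where blk: "is_block V E W F" using W unfolding blocks_def by blast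
  then have sub: "is_subgraph W F V E" and bi: "biconn W F" unfolding is_block_def by blast+
  have "is_subgraph (W \<union> f ` {0..n}) (F \<union> path_edges f n) V E"
    using sub fV fE unfolding is_subgraph_def path_edges_def by auto
  moreover have "biconn (W \<union> f ` {0..n}) (F \<union> path_edges f n)"
    using sub False f unfolding is_subgraph_def by (intro biconn_add_path[OF bi]) auto
  ultimately have "W \<union> f ` {0..n} = W" by (rule block_maximal[OF blk]) auto
  then show ?thesis by blast
qed

lemma ex_block_superset:
  assumes sg: "simple_graph V E" and "is_subgraph W F V E" "biconn W F"
  obtains W' where "W' \<in> blocks V E" "W \<subseteq> W'"
proof -
  \<comment> \<open>Maximal elements for the componentwise order on pairs (vertex set, edge set) are blocks.\<close>
  let ?S = "{(W', F'). is_subgraph W' F' V E \<and> biconn W' F'}"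
  have "finite V" "E \<subseteq> Pow V" using sg unfolding simple_graph_def by auto
  then have "finite (Pow V \<times> Pow E)" by (simp add: finite_subset)
  moreover have "?S \<subseteq> Pow V \<times> Pow E" unfolding is_subgraph_def by auto
  ultimately have "finite ?S" by (rule finite_subset[rotated])
  moreover have "(W, F) \<in> ?S" using assms(2,3) by simp
  ultimately obtain m where m: "m \<in> ?S" "(W, F) \<le> m" "\<forall>p\<in>?S. m \<le> p \<longrightarrow> m = p"
    by (rule finite_has_maximal2[elim_format]) blast
  obtain W' F' where mWF: "m = (W', F')" by (cases m)
  have "is_block V E W' F'"
    unfolding is_block_def
  proof (intro conjI)
    show "is_subgraph W' F' V E" "biconn W' F'" using m(1) mWF by auto
    show "\<forall>W'' F''. is_subgraph W'' F'' V E \<and> biconn W'' F'' \<and> W' \<subseteq> W'' \<and> F' \<subseteq> F''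
        \<longrightarrow> W'' = W' \<and> F'' = F'"
    proof (intro allI impI)
      fix W'' F'' assume "is_subgraph W'' F'' V E \<and> biconn W'' F'' \<and> W' \<subseteq> W'' \<and> F' \<subseteq> F''"
      then have "(W'', F'') \<in> ?S" "m \<le> (W'', F'')" using mWF by (auto simp: less_eq_prod_def)
      then have "m = (W'', F'')" using m(3) by blast
      then show "W'' = W' \<and> F'' = F'" using mWF by simp
    qed
  qed
  then have "W' \<in> blocks V E" unfolding blocks_def by blast
  moreover have "W \<subseteq> W'" using m(2) mWF by (simp add: less_eq_prod_def)
  ultimately show thesis by (rule that)
qed

lemma biconn_complete:
  assumes "K \<noteq> {}"
  shows "biconn K {{a, b} | a b. a \<in> K \<and> b \<in> K \<and> a \<noteq> b}"
  unfolding biconn_def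
proof (intro conjI ballI impI)
  show "connected_graph K {{a, b} | a b. a \<in> K \<and> b \<in> K \<and> a \<noteq> b}"
    using assms by (intro connected_graph_complete) auto
  fix v assume "K - {v} \<noteq> {}"
  then show "connected_graph (K - {v}) {e \<in> {{a, b} | a b. a \<in> K \<and> b \<in> K \<and> a \<noteq> b}. v \<notin> e}"
    by (intro connected_graph_complete) auto
qed

lemma clique_in_block:
  assumes sg: "simple_graph V E" and K: "K \<subseteq> V" "K \<noteq> {}" "is_clique E K"
  obtains W where "W \<in> blocks V E" "K \<subseteq> W"
proof (rule ex_block_superset[OF sg])
  show "is_subgraph K {{a, b} | a b. a \<in> K \<and> b \<in> K \<and> a \<noteq> b} V E"
    using K unfolding is_subgraph_def is_clique_def by auto
  show "biconn K {{a, b} | a b. a \<in> K \<and> b \<in> K \<and> a \<noteq> b}" using K(2) by (rule biconn_complete)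
qed (rule that)

lemma walk_shortest_return:
  assumes "finite V" "\<And>k. u k \<in> V" "\<And>k. u k \<noteq> u (Suc k)"
  obtains i d where "2 \<le> d" "u (i + d) = u i" "\<And>a b. a < b \<Longrightarrow> b < a + d \<Longrightarrow> u a \<noteq> u b"
proof -
  define Q where "Q d \<longleftrightarrow> 0 < d \<and> (\<exists>i. u (i + d) = u i)" for d
  have "\<not> inj u"
  proof
    assume "inj u"
    have "range u \<subseteq> V" using assms(2) by blast
    then have "finite (range u)" using assms(1) by (rule finite_subset)
    then show False using \<open>inj u\<close> finite_imageD[of u UNIV] by simp
  qed
  then obtain a b where ab: "a \<noteq> b" "u a = u b" unfolding inj_def by blast
  then have "Q (max a b - min a b)" unfolding Q_def
    by (intro conjI exI[of _ "min a b"]) (auto simp: min_def max_def)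
  define d where "d = (LEAST d. Q d)"
  have "Q d" unfolding d_def using \<open>Q (max a b - min a b)\<close> by (rule LeastI)
  then obtain i where d: "0 < d" "u (i + d) = u i" unfolding Q_def by blast
  have dist: "u a \<noteq> u b" if "a < b" "b < a + d" for a b
  proof
    assume "u a = u b"
    then have "Q (b - a)" using that(1) unfolding Q_def by (intro conjI exI[of _ a]) auto
    moreover have "b - a < d" using that by linarith
    ultimately show False unfolding d_def using not_less_Least by blast
  qed
  have "d \<noteq> 1" using d(2) assms(3)[of i] by auto
  then show thesis using d dist by (intro that) auto
qed

lemma simple_graph_edge_card: "simple_graph V E \<Longrightarrow> e \<in> E \<Longrightarrow> card e = 2"
  unfolding simple_graph_def by blast

lemma block_graph_no_chordless_walk:
  assumes bg: "block_graph V E" and uV: "\<And>k. u k \<in> V" and uE: "\<And>k. {u k, u (Suc k)} \<in> E"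
    and chordless: "\<And>k. u k \<noteq> u (Suc (Suc k)) \<and> {u k, u (Suc (Suc k))} \<notin> E"
  shows False
proof -
  have sg: "simple_graph V E" using bg unfolding block_graph_def by blast
  then have finV: "finite V" unfolding simple_graph_def by blast
  have uneq: "u k \<noteq> u (Suc k)" for k
  proof
    assume "u k = u (Suc k)"
    moreover have "card {u k, u (Suc k)} = 2" using sg uE[of k] by (rule simple_graph_edge_card)
    ultimately show False by simp
  qed
  obtain i d where d: "2 \<le> d" "u (i + d) = u i"
    and dist: "\<And>a b. a < b \<Longrightarrow> b < a + d \<Longrightarrow> u a \<noteq> u b"
    by (rule walk_shortest_return[of V u, OF finV uV uneq]) blast
  have "is_clique E {u i, u (Suc i)}" unfolding is_clique_def using uE[of i] by (auto simp: insert_commute)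
  moreover have "{u i, u (Suc i)} \<subseteq> V" using uV by simp
  ultimately obtain W where W: "W \<in> blocks V E" "{u i, u (Suc i)} \<subseteq> W"
    by (elim clique_in_block[OF sg, rotated 2]) auto
  \<comment> \<open>The shortest return u (i+1), ..., u (i+d) = u i is a path with both ends in the block W,
    so W contains u (i+2); being a clique, W then has the chord from u i to u (i+2).\<close>
  define f where "f k = u (Suc i + k)" for k
  have "inj_on f {0..d - 1}"
  proof (rule inj_onI)
    fix a b assume ab: "a \<in> {0..d - 1}" "b \<in> {0..d - 1}" "f a = f b"
    then have "a < b + d" "b < a + d" using d(1) by auto
    then show "a = b" using ab(3) dist[of "Suc i + a" "Suc i + b"] dist[of "Suc i + b" "Suc i + a"]
      unfolding f_def by (cases a b rule: linorder_cases) auto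
  qed
  moreover have "f 0 \<in> W" "f (d - 1) \<in> W" using W(2) d unfolding f_def by auto
  ultimately have "f ` {0..d - 1} \<subseteq> W"
    using uV uE by (intro block_contains_path[OF W(1)]) (auto simp: f_def)
  moreover have "1 \<in> {0..d - 1}" using d(1) by simp
  ultimately have "f 1 \<in> W" by blast
  then have "u (Suc (Suc i)) \<in> W" unfolding f_def by simp
  then have "{u i, u (Suc (Suc i))} \<in> E" using W chordless[of i] by (intro block_edge[OF bg]) auto
  then show False using chordless[of i] by simp
qed

lemma block_graph_no_chord_at_cut_vertex:
  assumes bg: "block_graph V E" and W: "W1 \<in> blocks V E" "W2 \<in> blocks V E" "W1 \<noteq> W2"
    and xyz: "x \<in> W1" "y \<in> W1 \<inter> W2" "z \<in> W2" "x \<noteq> y" "y \<noteq> z"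
  shows "x \<noteq> z \<and> {x, z} \<notin> E"
proof
  show "x \<noteq> z"
  proof
    assume "x = z"
    then have "W1 = W2" using xyz by (intro blocks_eq_if_two_common_vertices[OF W(1,2), of x y]) auto
    then show False using W(3) by contradiction
  qed
  show "{x, z} \<notin> E"
  proof
    assume xz: "{x, z} \<in> E"
    have sg: "simple_graph V E" using bg unfolding block_graph_def by blast
    have "{x, y} \<in> E" "{y, z} \<in> E" using xyz by (auto intro: block_edge[OF bg W(1)] block_edge[OF bg W(2)])
    then have "is_clique E {x, y, z}" using xz unfolding is_clique_def by (auto simp: insert_commute)
    moreover have "{x, y, z} \<subseteq> V" using xyz blocks_subset[OF W(1)] blocks_subset[OF W(2)] by blast
    ultimately obtain W where W': "W \<in> blocks V E" "{x, y, z} \<subseteq> W"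
      by (elim clique_in_block[OF sg, rotated 2]) auto
    have "W = W1" using W' xyz by (intro blocks_eq_if_two_common_vertices[OF W'(1) W(1), of x y]) auto
    moreover have "W = W2" using W' xyz by (intro blocks_eq_if_two_common_vertices[OF W'(1) W(2), of y z]) auto
    ultimately show False using W(3) by simp
  qed
qed

lemma chain_if_no_leaf:
  assumes "B0 \<in> C" and no_leaf: "\<forall>B\<in>C. \<forall>y. \<exists>B'\<in>C - {B}. \<not> B \<inter> B' \<subseteq> {y}"
  obtains Bs :: "nat \<Rightarrow> 'a set" and u :: "nat \<Rightarrow> 'a"
  where "\<And>k. Bs k \<in> C" "\<And>k. Bs (Suc k) \<noteq> Bs k" "\<And>k. u k \<in> Bs k \<inter> Bs (Suc k)"
    "\<And>k. u (Suc k) \<noteq> u k"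
proof -
  \<comment> \<open>From a block B entered at y, move to another block B' through a vertex of B other than y.\<close>
  have step: "\<exists>q. fst q \<in> C - {fst p} \<and> snd q \<in> fst p \<inter> fst q - {snd p}" if p: "fst p \<in> C" for p
  proof -
    obtain B' where B': "B' \<in> C - {fst p}" "\<not> fst p \<inter> B' \<subseteq> {snd p}"
      using no_leaf[rule_format, OF p, of "snd p"] by (rule bexE)
    then obtain x where "x \<in> fst p \<inter> B'" "x \<noteq> snd p" by blast
    then show ?thesis using B'(1) by (intro exI[of _ "(B', x)"]) simp
  qed
  define nxt where "nxt p = (SOME q. fst q \<in> C - {fst p} \<and> snd q \<in> fst p \<inter> fst q - {snd p})" for p
  have nxt: "fst (nxt p) \<in> C - {fst p} \<and> snd (nxt p) \<in> fst p \<inter> fst (nxt p) - {snd p}"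
    if "fst p \<in> C" for p
    unfolding nxt_def by (rule someI_ex[OF step[OF that]])
  define s where "s k = (nxt ^^ k) (B0, undefined)" for k
  have s_Suc: "s (Suc k) = nxt (s k)" for k unfolding s_def by simp
  have sC: "fst (s k) \<in> C" for k
  proof (induction k)
    case 0
    then show ?case using assms(1) unfolding s_def by simp
  next
    case (Suc k)
    then show ?case using nxt s_Suc by simp
  qed
  show thesis
  proof (rule that)
    fix k
    show "fst (s k) \<in> C" by (rule sC)
    show "fst (s (Suc k)) \<noteq> fst (s k)" using nxt[OF sC[of k]] s_Suc by simp
    show "snd (s (Suc k)) \<in> fst (s k) \<inter> fst (s (Suc k))" using nxt[OF sC[of k]] s_Suc by simp
    show "snd (s (Suc (Suc k))) \<noteq> snd (s (Suc k))" using nxt[OF sC[of "Suc k"]] s_Suc by simp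
  qed
qed

lemma blocks_treelike:
  assumes bg: "block_graph V E"
  shows "treelike (blocks V E)"
  unfolding treelike_def
proof (intro allI impI)
  fix C assume C: "C \<subseteq> blocks V E" "C \<noteq> {}"
  show "\<exists>B\<in>C. \<exists>y. \<forall>B'\<in>C - {B}. B \<inter> B' \<subseteq> {y}"
  proof (rule ccontr)
    assume no_leaf: "\<not> ?thesis"
    obtain B0 where "B0 \<in> C" using C(2) by blast
    moreover have "\<forall>B\<in>C. \<forall>y. \<exists>B'\<in>C - {B}. \<not> B \<inter> B' \<subseteq> {y}" using no_leaf by metis
    ultimately obtain Bs u where Bs: "\<And>k. Bs k \<in> C" "\<And>k. Bs (Suc k) \<noteq> Bs k"
      and u: "\<And>k. u k \<in> Bs k \<inter> Bs (Suc k)" "\<And>k. u (Suc k) \<noteq> u k"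
      by (rule chain_if_no_leaf) (rule that)
    have blk: "Bs k \<in> blocks V E" for k using Bs(1) C(1) by blast
    show False
    proof (rule block_graph_no_chordless_walk[OF bg])
      show "u k \<in> V" for k using u(1) blocks_subset[OF blk] by blast
      show "{u k, u (Suc k)} \<in> E" for k
        using u by (intro block_edge[OF bg blk[of "Suc k"]]) (auto simp: eq_commute)
      show "u k \<noteq> u (Suc (Suc k)) \<and> {u k, u (Suc (Suc k))} \<notin> E" for k
        using u Bs(2)[of "Suc k"]
        by (intro block_graph_no_chord_at_cut_vertex[OF bg blk[of "Suc k"] blk[of "Suc (Suc k)"]])
          (auto simp: eq_commute)
    qed
  qed
qed

lemma CF_eq_capped_complex_blocks:
  assumes t: "0 < t" and bg: "block_graph V E"
  shows "CF t V E = capped_complex V (blocks V E) (\<lambda>_. t - 1)"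
proof -
  have sg: "simple_graph V E" using bg unfolding block_graph_def by blast
  have finV: "finite V" using sg unfolding simple_graph_def by blast
  have key: "(\<exists>K\<subseteq>A. card K = t \<and> is_clique E K) \<longleftrightarrow> (\<exists>W\<in>blocks V E. t \<le> card (A \<inter> W))"
    if A: "A \<subseteq> V" for A
  proof
    assume "\<exists>K\<subseteq>A. card K = t \<and> is_clique E K"
    then obtain K where K: "K \<subseteq> A" "card K = t" "is_clique E K" by blast
    then have "K \<noteq> {}" using t by auto
    then obtain W where W: "W \<in> blocks V E" "K \<subseteq> W"
      using K A by (elim clique_in_block[OF sg, rotated 2]) auto
    have "finite (A \<inter> W)" using A finV finite_subset by blast
    then have "card K \<le> card (A \<inter> W)" using K(1) W(2) by (intro card_mono) auto
    then show "\<exists>W\<in>blocks V E. t \<le> card (A \<inter> W)" using W(1) K(2) by blast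
  next
    assume "\<exists>W\<in>blocks V E. t \<le> card (A \<inter> W)"
    then obtain W where W: "W \<in> blocks V E" "t \<le> card (A \<inter> W)" by blast
    moreover have "finite (A \<inter> W)" using A finV finite_subset by blast
    ultimately obtain K where K: "K \<subseteq> A \<inter> W" "card K = t" by (meson obtain_subset_with_card_n)
    have "is_clique E K" unfolding is_clique_def using K(1) block_edge[OF bg W(1)] by blast
    then show "\<exists>K\<subseteq>A. card K = t \<and> is_clique E K" using K by blast
  qed
  show ?thesis
  proof (intro set_eqI)
    fix A
    show "A \<in> CF t V E \<longleftrightarrow> A \<in> capped_complex V (blocks V E) (\<lambda>_. t - 1)"
    proof (cases "A \<subseteq> V")
      case True
      have "A \<in> CF t V E \<longleftrightarrow> \<not> (\<exists>K\<subseteq>A. card K = t \<and> is_clique E K)"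
        using True unfolding CF_def by blast
      also have "\<dots> \<longleftrightarrow> \<not> (\<exists>W\<in>blocks V E. t \<le> card (A \<inter> W))" using key[OF True] by blast
      also have "\<dots> \<longleftrightarrow> A \<in> capped_complex V (blocks V E) (\<lambda>_. t - 1)"
        using True t unfolding capped_complex_def by auto
      finally show ?thesis .
    qed (simp add: CF_def capped_complex_def)
  qed
qed

theorem corollary3p4:
  fixes V :: "'a set" and E :: "'a set set" and t :: nat
  assumes "t \<ge> 3" and "block_graph V E"
  shows "k_decomposable (t - 2) (CF t V E) \<and> shellable (CF t V E)"
proof -
  have finV: "finite V" using assms(2) unfolding block_graph_def simple_graph_def by blast
  have CF: "CF t V E = capped_complex V (blocks V E) (\<lambda>_. t - 1)"
    using assms by (intro CF_eq_capped_complex_blocks) auto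
  have vd: "k_decomposable 0 (CF t V E)"
    unfolding CF by (rule capped_complex_vertex_decomposable[OF finV blocks_treelike[OF assms(2)]])
  have "CF t V E \<subseteq> Pow V" unfolding CF by (rule capped_complex_subset_Pow)
  then show ?thesis using k_decomposable_mono[OF vd] vertex_decomposable_shellable[OF vd finV] by simp
qed

end
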